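(* If $H\in\mathcal{H}'$ and $H\notin\{K_4,W_5,M_7,J_7\}$, then $|V(H)|\ge 8$.
   Context: $M_7$ (Moser spindle): vertices $v_1,\dots,v_5,w_1,w_2$, with 5-cycle $v_1\cdots v_5$, $w_1$ adjacent to $v_1,v_2,v_3$ and $w_2$ adjacent to $v_1,v_4,v_5$. A near-bipartite coloring of a graph is a partition of its vertices into $I,F$ with $I$ independent and $G[F]$ a forest; a graph is nb-critical if it has none but every proper subgraph has one. Base graphs: $K_4$; the wheel $W_5$ (5-cycle plus a vertex adjacent to all its vertices); $J_7$, with vertices $w_1,\dots,w_4,v_1,v_2,v_3$ and edges $w_1v_1,w_1v_3,w_1w_4,w_2v_1,w_2v_2,w_2w_4,w_3v_2,w_3v_3,w_3w_4,v_1v_2,v_1v_3,v_2v_3$; and $J_{12}$, with vertices $a,b,p_1,\dots,p_4,q_1,\dots,q_6$ and edges $ab,p_1p_2,p_3p_4,ap_1,ap_2,bp_3,bp_4,q_1p_1,q_1p_2,q_2p_1,q_2p_2,q_3p_3,q_3p_4,q_4p_3,q_4p_4,q_5q_1,q_5q_3,q_6q_2,q_6q_4,q_5q_6$. The family $\mathcal{H}'$ is defined recursively: $s,t$ are specially-linked in $J$ if there exist $H\in\mathcal{H}'$ and $vw\in E(H)$ such that $J$ contains a subgraph isomorphic to $H-vw$ with $v\mapsto s,w\mapsto t$. $H\in\mathcal{H}'$ iff $H$ is a base graph, or $H$ is nb-critical with an induced cycle $C=x_1\cdots x_k$, $k\in\{3,5\}$, all $x_i$ of degree 3 in $H$, such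 that with $N(x_j)=\{x_{j-1},x_{j+1},z_j\}$ (indices mod $k$), whenever $z_j\ne z_{j+1}$ the vertices $z_j,z_{j+1}$ are specially-linked in $H-V(C)$. *)

theory Defs
  imports Main
begin

type_synonym 'a ugraph = "'a set \<times> 'a set set"

definition verts :: "'a ugraph \<Rightarrow> 'a set" where "verts G = fst G"
definition edges :: "'a ugraph \<Rightarrow> 'a set set" where "edges G = snd G"

definition wf_graph :: "'a ugraph \<Rightarrow> bool" where
  "wf_graph G \<longleftrightarrow> finite (verts G) \<and>
     (\<forall>e\<in>edges G. \<exists>u v. u \<noteq> v \<and> e = {u, v} \<and> u \<in> verts G \<and> v \<in> verts G)"

definition adj :: "'a ugraph \<Rightarrow> 'a \<Rightarrow> 'a \<Rightarrow> bool" where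
  "adj G u v \<longleftrightarrow> {u, v} \<in> edges G"

definition nbhd :: "'a ugraph \<Rightarrow> 'a \<Rightarrow> 'a set" where
  "nbhd G v = {u. adj G v u}"

definition degree :: "'a ugraph \<Rightarrow> 'a \<Rightarrow> nat" where
  "degree G v = card (nbhd G v)"

definition is_cycle :: "'a ugraph \<Rightarrow> 'a list \<Rightarrow> bool" where
  "is_cycle G xs \<longleftrightarrow> length xs \<ge> 3 \<and> distinct xs \<and> set xs \<subseteq> verts G \<and>
     (\<forall>i < length xs. adj G (xs ! i) (xs ! ((i + 1) mod length xs)))"

definition induced_cycle :: "'a ugraph \<Rightarrow> 'a list \<Rightarrow> bool" where
  "induced_cycle G xs \<longleftrightarrow> is_cycle G xs \<and>
     (\<forall>u\<in>set xs. \<forall>v\<in>set xs. adj G u v \<longrightarrow>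
        (\<exists>i < length xs. {u, v} = {xs ! i, xs ! ((i + 1) mod length xs)}))"

definition independent :: "'a ugraph \<Rightarrow> 'a set \<Rightarrow> bool" where
  "independent G I \<longleftrightarrow> I \<subseteq> verts G \<and> (\<forall>u\<in>I. \<forall>v\<in>I. \<not> adj G u v)"

text \<open>The induced subgraph G[F] is a forest: it contains no cycle (the edges of G[F]
  are exactly the edges of G between vertices of F).\<close>
definition induces_forest :: "'a ugraph \<Rightarrow> 'a set \<Rightarrow> bool" where
  "induces_forest G F \<longleftrightarrow> F \<subseteq> verts G \<and> \<not> (\<exists>xs. is_cycle G xs \<and> set xs \<subseteq> F)"

definition nb_coloring :: "'a ugraph \<Rightarrow> 'a set \<Rightarrow> 'a set \<Rightarrow> bool" where
  "nb_coloring G I F \<longleftrightarrow> I \<union> F = verts G \<and> I \<inter> F = {} \<and>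
     independent G I \<and> induces_forest G F"

definition near_bipartite :: "'a ugraph \<Rightarrow> bool" where
  "near_bipartite G \<longleftrightarrow> (\<exists>I F. nb_coloring G I F)"

definition subgraph :: "'a ugraph \<Rightarrow> 'a ugraph \<Rightarrow> bool" where
  "subgraph H G \<longleftrightarrow> wf_graph H \<and> verts H \<subseteq> verts G \<and> edges H \<subseteq> edges G"

definition nb_critical :: "'a ugraph \<Rightarrow> bool" where
  "nb_critical G \<longleftrightarrow> wf_graph G \<and> \<not> near_bipartite G \<and>
     (\<forall>H. subgraph H G \<and> H \<noteq> G \<longrightarrow> near_bipartite H)"

definition delete_vertices :: "'a ugraph \<Rightarrow> 'a set \<Rightarrow> 'a ugraph" where
  "delete_vertices G S = (verts G - S, {e \<in> edges G. e \<inter> S = {}})"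

definition delete_edge :: "'a ugraph \<Rightarrow> 'a set \<Rightarrow> 'a ugraph" where
  "delete_edge G e = (verts G, edges G - {e})"

definition embeds_via :: "('a \<Rightarrow> 'b) \<Rightarrow> 'a ugraph \<Rightarrow> 'b ugraph \<Rightarrow> bool" where
  "embeds_via f H J \<longleftrightarrow> inj_on f (verts H) \<and> f ` verts H \<subseteq> verts J \<and>
     (\<forall>u v. {u, v} \<in> edges H \<longrightarrow> {f u, f v} \<in> edges J)"

definition graph_iso :: "'a ugraph \<Rightarrow> 'b ugraph \<Rightarrow> bool" where
  "graph_iso G H \<longleftrightarrow> (\<exists>f. bij_betw f (verts G) (verts H) \<and>
     (\<forall>u\<in>verts G. \<forall>v\<in>verts G. {u, v} \<in> edges G \<longleftrightarrow> {f u, f v} \<in> edges H))"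

definition mk_graph :: "nat \<Rightarrow> (nat \<times> nat) list \<Rightarrow> nat ugraph" where
  "mk_graph n es = ({0..<n}, (\<lambda>(a, b). {a, b}) ` set es)"

definition K4 :: "nat ugraph" where
  "K4 = mk_graph 4 [(0,1),(0,2),(0,3),(1,2),(1,3),(2,3)]"

definition W5 :: "nat ugraph" where
  "W5 = mk_graph 6 [(0,1),(1,2),(2,3),(3,4),(4,0),(5,0),(5,1),(5,2),(5,3),(5,4)]"

text \<open>M7: v1..v5 = 1..5, w1 = 6, w2 = 7 (vertex 0 unused, so vertex set is 1..7)\<close>
definition M7 :: "nat ugraph" where
  "M7 = ({1..7}, (\<lambda>(a, b). {a, b}) ` set
     [(1,2),(2,3),(3,4),(4,5),(5,1),(6,1),(6,2),(6,3),(7,1),(7,4),(7,5)])"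

text \<open>J7: w1..w4 = 0..3, v1,v2,v3 = 4,5,6\<close>
definition J7 :: "nat ugraph" where
  "J7 = mk_graph 7 [(0,4),(0,6),(0,3),(1,4),(1,5),(1,3),(2,5),(2,6),(2,3),(4,5),(4,6),(5,6)]"

text \<open>J12: a = 0, b = 1, p1..p4 = 2..5, q1..q6 = 6..11\<close>
definition J12 :: "nat ugraph" where
  "J12 = mk_graph 12 [(0,1),(2,3),(4,5),(0,2),(0,3),(1,4),(1,5),(6,2),(6,3),(7,2),(7,3),
                      (8,4),(8,5),(9,4),(9,5),(10,6),(10,8),(11,7),(11,9),(10,11)]"

definition base_graph :: "nat ugraph \<Rightarrow> bool" where
  "base_graph H \<longleftrightarrow> graph_iso H K4 \<or> graph_iso H W5 \<or> graph_iso H J7 \<or> graph_iso H J12"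

text \<open>Graphs of the family are represented with vertices in nat (every finite graph is
  isomorphic to one of these). s, t are specially linked in J iff there exist H0 in H'
  and an edge vw of H0 such that J contains a subgraph isomorphic to H0 - vw with v to s,
  w to t.\<close>
inductive_set Hp :: "nat ugraph set" where
  base: "wf_graph H \<Longrightarrow> base_graph H \<Longrightarrow> H \<in> Hp"
| step: "nb_critical H \<Longrightarrow> induced_cycle H xs \<Longrightarrow> length xs \<in> {3, 5} \<Longrightarrow>
     (\<forall>x\<in>set xs. degree H x = 3) \<Longrightarrow>
     (\<forall>j < length xs. \<forall>z z'.
        (let k = length xs;
             xm = xs ! ((j + k - 1) mod k); x = xs ! j;
             x1 = xs ! ((j + 1) mod k); x2 = xs ! ((j + 2) mod k)
         in nbhd H x = {xm, x1, z} \<and> nbhd H x1 = {x, x2, z'} \<and> z \<noteq> z')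
        \<longrightarrow> (\<exists>H0 v w f. H0 \<in> Hp \<and> {v, w} \<in> edges H0 \<and>
               embeds_via f (delete_edge H0 {v, w}) (delete_vertices H (set xs)) \<and>
               f v = z \<and> f w = z')) \<Longrightarrow>
     H \<in> Hp"

end

theory Submission
  imports Defs
begin

text \<open>
  A base graph other than \<open>K4\<close>, \<open>W5\<close> and \<open>J7\<close> is \<open>J12\<close>, which has twelve vertices.
  Otherwise \<open>H\<close> is nb-critical with an induced triangle or pentagon \<open>C\<close> of degree-3
  vertices, the \<open>j\<close>-th of which has a third neighbour \<open>z\<^sub>j\<close> off \<open>C\<close>. Every graph of the
  family has at least four vertices, and exactly four only if it is \<open>K4\<close>. So if \<open>z\<^sub>j\<close> and
  \<open>z\<^sub>j\<^sub>+\<^sub>1\<close> are specially linked in \<open>H - C\<close>, then \<open>H\<close> has at least \<open>|C| + 4\<close> vertices;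
  if it has at most seven, \<open>C\<close> is a triangle and \<open>H - C\<close> is \<open>K4\<close> minus the edge
  \<open>z\<^sub>jz\<^sub>j\<^sub>+\<^sub>1\<close>, which is missing from \<open>H\<close> as well. For a pentagon all \<open>z\<^sub>j\<close> therefore
  coincide, so \<open>H\<close> contains \<open>W5\<close> and, being nb-critical, is \<open>W5\<close>. For a triangle, three
  equal \<open>z\<^sub>j\<close> give \<open>K4\<close> in the same way, exactly two equal ones determine all edges of
  \<open>H\<close>, which is then \<open>M7\<close>, and three distinct ones are impossible: \<open>z\<^sub>2\<close> would be one
  of the two common neighbours of \<open>z\<^sub>0\<close> and \<open>z\<^sub>1\<close> in \<open>H - C\<close>, yet not adjacent to \<open>z\<^sub>0\<close>.
\<close>

lemma verts_pair [simp]: "verts (V, E) = V"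
  by (simp add: verts_def)

lemma edges_pair [simp]: "edges (V, E) = E"
  by (simp add: edges_def)

lemma nb_critical_wf_graph: "nb_critical G \<Longrightarrow> wf_graph G"
  by (simp add: nb_critical_def)

lemma adj_sym: "adj G u v \<longleftrightarrow> adj G v u"
  by (simp add: adj_def insert_commute)

lemma adj_wf_graph:
  assumes "wf_graph G" "adj G u v"
  shows "u \<in> verts G" "v \<in> verts G" "u \<noteq> v"
  using assms unfolding wf_graph_def adj_def by (metis doubleton_eq_iff)+

lemma is_cycle_3:
  "is_cycle G [a, b, c] \<longleftrightarrow> distinct [a, b, c] \<and> {a, b, c} \<subseteq> verts G \<and>
     adj G a b \<and> adj G b c \<and> adj G c a"
  unfolding is_cycle_def by (simp add: All_less_Suc2)

lemma is_cycle_5: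
  "is_cycle G [a, b, c, d, e] \<longleftrightarrow> distinct [a, b, c, d, e] \<and> {a, b, c, d, e} \<subseteq> verts G \<and>
     adj G a b \<and> adj G b c \<and> adj G c d \<and> adj G d e \<and> adj G e a"
  unfolding is_cycle_def by (simp add: All_less_Suc2)

lemma degree_3_nbhdE:
  assumes wf: "wf_graph G" and deg: "degree G x = 3"
    and a: "adj G x a" and b: "adj G x b" and ab: "a \<noteq> b"
  obtains z where "nbhd G x = {a, b, z}" "z \<notin> {a, b, x}"
proof -
  have sub: "{a, b} \<subseteq> nbhd G x" using a b by (simp add: nbhd_def)
  have "card (nbhd G x - {a, b}) = 1"
    using deg ab sub by (simp add: degree_def card_Diff_subset)
  then obtain z where z: "nbhd G x - {a, b} = {z}" by (auto simp: card_1_singleton_iff)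
  then have "adj G x z" by (auto simp: nbhd_def)
  then have "z \<noteq> x" using adj_wf_graph(3)[OF wf] by blast
  moreover have "nbhd G x = {a, b, z}" using z sub by auto
  ultimately show thesis using that z by blast
qed

lemma embeds_via_card:
  assumes wf: "wf_graph H" and C: "C \<subseteq> verts H" and emb: "embeds_via f G (delete_vertices H C)"
  shows "card (verts G) + card C \<le> card (verts H)"
proof -
  have fin: "finite (verts H)" using wf by (simp add: wf_graph_def)
  have "inj_on f (verts G)" "f ` verts G \<subseteq> verts H - C"
    using emb by (auto simp: embeds_via_def delete_vertices_def)
  then have "card (verts G) \<le> card (verts H - C)"
    using fin by (metis card_image card_mono finite_Diff)
  also have "\<dots> = card (verts H) - card C" using C fin by (simp add: card_Diff_subset finite_subset)
  finally show ?thesis using card_mono[OF fin C] by linarith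
qed

lemma graph_iso_card: "graph_iso G H \<Longrightarrow> card (verts G) = card (verts H)"
  unfolding graph_iso_def using bij_betw_same_card by blast

lemma card_verts_K4: "card (verts K4) = 4" by (simp add: K4_def mk_graph_def verts_def)
lemma card_verts_W5: "card (verts W5) = 6" by (simp add: W5_def mk_graph_def verts_def)
lemma card_verts_J7: "card (verts J7) = 7" by (simp add: J7_def mk_graph_def verts_def)
lemma card_verts_J12: "card (verts J12) = 12" by (simp add: J12_def mk_graph_def verts_def)

lemma K4_complete:
  assumes "a \<in> verts K4" "b \<in> verts K4" "a \<noteq> b"
  shows "{a, b} \<in> edges K4"
proof -
  have "a \<in> {0, 1, 2, 3}" "b \<in> {0, 1, 2, 3}" using assms by (auto simp: K4_def mk_graph_def verts_def)
  then show ?thesis using assms(3) by (auto simp: K4_def mk_graph_def edges_def insert_commute)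
qed

lemma graph_iso_K4_adj:
  assumes iso: "graph_iso G K4" and uv: "u \<in> verts G" "v \<in> verts G" "u \<noteq> v"
  shows "adj G u v"
proof -
  obtain f where f: "bij_betw f (verts G) (verts K4)"
    and e: "\<forall>u\<in>verts G. \<forall>v\<in>verts G. {u, v} \<in> edges G \<longleftrightarrow> {f u, f v} \<in> edges K4"
    using iso unfolding graph_iso_def by blast
  have "f u \<in> verts K4" "f v \<in> verts K4" using f uv by (auto dest: bij_betwE)
  moreover have "f u \<noteq> f v" using f uv by (meson bij_betw_imp_inj_on inj_on_contraD)
  ultimately have "{f u, f v} \<in> edges K4" by (rule K4_complete)
  then show ?thesis using e uv by (simp add: adj_def)
qed

lemma graph_iso_from_edge_image:
  assumes bij: "bij_betw g (verts B) (verts A)"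
    and sub: "\<forall>e\<in>edges B. e \<subseteq> verts B"
    and edges: "edges A = (\<lambda>e. g ` e) ` edges B"
  shows "graph_iso A B"
proof -
  define f where "f = inv_into (verts B) g"
  have bf: "bij_betw f (verts A) (verts B)" unfolding f_def using bij by (rule bij_betw_inv_into)
  have gf: "g (f u) = u" if "u \<in> verts A" for u
    using that bij unfolding f_def by (meson bij_betw_inv_into_right)
  have fg: "f (g a) = a" if "a \<in> verts B" for a
    using that bij unfolding f_def by (meson bij_betw_inv_into_left)
  have "{u, v} \<in> edges A \<longleftrightarrow> {f u, f v} \<in> edges B" if "u \<in> verts A" "v \<in> verts A" for u v
  proof
    assume "{u, v} \<in> edges A"
    then obtain e where e: "e \<in> edges B" "{u, v} = g ` e" using edges by auto
    have "e = f ` g ` e" using fg sub e(1) by (force simp: image_image)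
    also have "\<dots> = {f u, f v}" using e(2) by (metis image_empty image_insert)
    finally show "{f u, f v} \<in> edges B" using e(1) by simp
  next
    assume "{f u, f v} \<in> edges B"
    then have "g ` {f u, f v} \<in> edges A" using edges by blast
    then show "{u, v} \<in> edges A" using gf that by simp
  qed
  then show ?thesis unfolding graph_iso_def using bf by blast
qed

lemma graph_iso_K4I:
  assumes "distinct [a, b, c, d]"
  shows "graph_iso ({a, b, c, d}, {{a, b}, {a, c}, {a, d}, {b, c}, {b, d}, {c, d}}) K4"
  by (rule graph_iso_from_edge_image[where g = "(!) [a, b, c, d]"])
    (use assms in \<open>auto simp: K4_def mk_graph_def verts_def edges_def intro!: bij_betw_nth\<close>)

lemma graph_iso_W5I:
  assumes "distinct [a, b, c, d, e, h]"
  shows "graph_iso ({a, b, c, d, e, h},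
    {{a, b}, {b, c}, {c, d}, {d, e}, {e, a}, {h, a}, {h, b}, {h, c}, {h, d}, {h, e}}) W5"
  by (rule graph_iso_from_edge_image[where g = "(!) [a, b, c, d, e, h]"])
    (use assms in \<open>auto simp: W5_def mk_graph_def verts_def edges_def intro!: bij_betw_nth\<close>)

lemma graph_iso_M7I:
  assumes "distinct [v1, v2, v3, v4, v5, w1, w2]"
  shows "graph_iso ({v1, v2, v3, v4, v5, w1, w2},
    {{v1, v2}, {v2, v3}, {v3, v4}, {v4, v5}, {v5, v1},
     {w1, v1}, {w1, v2}, {w1, v3}, {w2, v1}, {w2, v4}, {w2, v5}}) M7"
proof -
  let ?g = "\<lambda>i. [v1, v2, v3, v4, v5, w1, w2] ! (i - 1)"
  have "bij_betw (\<lambda>i::nat. i - 1) {1..7} {..<7}"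
    by (rule bij_betw_byWitness[where f' = Suc]) auto
  moreover have "bij_betw ((!) [v1, v2, v3, v4, v5, w1, w2]) {..<7} {v1, v2, v3, v4, v5, w1, w2}"
    by (rule bij_betw_nth) (use assms in auto)
  ultimately have "bij_betw ?g {1..7} {v1, v2, v3, v4, v5, w1, w2}"
    using bij_betw_trans by (fastforce simp: comp_def)
  then show ?thesis
    by (intro graph_iso_from_edge_image[where g = ?g]) (auto simp: M7_def verts_def edges_def)
qed

lemma nb_coloring_vertex: "nb_coloring G I F \<Longrightarrow> v \<in> verts G \<Longrightarrow> v \<in> I \<or> v \<in> F"
  by (auto simp: nb_coloring_def)

lemma nb_coloring_edge: "nb_coloring G I F \<Longrightarrow> adj G u v \<Longrightarrow> u \<in> I \<Longrightarrow> v \<notin> I"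
  by (auto simp: nb_coloring_def independent_def)

lemma nb_coloring_cycle: "nb_coloring G I F \<Longrightarrow> is_cycle G xs \<Longrightarrow> \<not> set xs \<subseteq> F"
  by (auto simp: nb_coloring_def induces_forest_def)

lemma K4_not_near_bipartite:
  assumes "distinct [a, b, c, d]"
  shows "\<not> near_bipartite ({a, b, c, d}, {{a, b}, {a, c}, {a, d}, {b, c}, {b, d}, {c, d}})"
    (is "\<not> near_bipartite ?K")
proof
  assume "near_bipartite ?K"
  then obtain I F where col: "nb_coloring ?K I F" by (auto simp: near_bipartite_def)
  have "is_cycle ?K [a, b, c]" "is_cycle ?K [a, b, d]" "is_cycle ?K [a, c, d]" "is_cycle ?K [b, c, d]"
    using assms by (auto simp: is_cycle_3 adj_def verts_def edges_def)
  then have "\<not> (a \<in> F \<and> b \<in> F \<and> c \<in> F)" "\<not> (a \<in> F \<and> b \<in> F \<and> d \<in> F)"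
    "\<not> (a \<in> F \<and> c \<in> F \<and> d \<in> F)" "\<not> (b \<in> F \<and> c \<in> F \<and> d \<in> F)"
    using nb_coloring_cycle[OF col] by fastforce+
  moreover have "adj ?K a b" "adj ?K a c" "adj ?K a d" "adj ?K b c" "adj ?K b d" "adj ?K c d"
    by (simp_all add: adj_def edges_def)
  then have "a \<in> I \<Longrightarrow> b \<notin> I" "a \<in> I \<Longrightarrow> c \<notin> I" "a \<in> I \<Longrightarrow> d \<notin> I"
    "b \<in> I \<Longrightarrow> c \<notin> I" "b \<in> I \<Longrightarrow> d \<notin> I" "c \<in> I \<Longrightarrow> d \<notin> I"
    using nb_coloring_edge[OF col] by blast+
  moreover have "a \<in> I \<or> a \<in> F" "b \<in> I \<or> b \<in> F" "c \<in> I \<or> c \<in> F" "d \<in> I \<or> d \<in> F"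
    using nb_coloring_vertex[OF col] by (simp_all add: verts_def)
  ultimately show False by argo
qed

lemma W5_not_near_bipartite:
  assumes "distinct [a, b, c, d, e, h]"
  shows "\<not> near_bipartite ({a, b, c, d, e, h},
    {{a, b}, {b, c}, {c, d}, {d, e}, {e, a}, {h, a}, {h, b}, {h, c}, {h, d}, {h, e}})"
    (is "\<not> near_bipartite ?W")
proof
  assume "near_bipartite ?W"
  then obtain I F where col: "nb_coloring ?W I F" by (auto simp: near_bipartite_def)
  have "is_cycle ?W [h, a, b]" "is_cycle ?W [h, b, c]" "is_cycle ?W [h, c, d]"
    "is_cycle ?W [h, d, e]" "is_cycle ?W [h, e, a]" "is_cycle ?W [a, b, c, d, e]"
    using assms distinct_rev[of "[a, b, c, d, e, h]"]
    by (simp_all add: is_cycle_3 is_cycle_5 adj_def verts_def edges_def doubleton_eq_iff)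
  then have "\<not> (h \<in> F \<and> a \<in> F \<and> b \<in> F)" "\<not> (h \<in> F \<and> b \<in> F \<and> c \<in> F)"
    "\<not> (h \<in> F \<and> c \<in> F \<and> d \<in> F)" "\<not> (h \<in> F \<and> d \<in> F \<and> e \<in> F)"
    "\<not> (h \<in> F \<and> e \<in> F \<and> a \<in> F)" "\<not> (a \<in> F \<and> b \<in> F \<and> c \<in> F \<and> d \<in> F \<and> e \<in> F)"
    using nb_coloring_cycle[OF col] by fastforce+
  moreover have "adj ?W a b" "adj ?W b c" "adj ?W c d" "adj ?W d e" "adj ?W e a"
    "adj ?W h a" "adj ?W h b" "adj ?W h c" "adj ?W h d" "adj ?W h e"
    by (simp_all add: adj_def edges_def)
  then have "a \<in> I \<Longrightarrow> b \<notin> I" "b \<in> I \<Longrightarrow> c \<notin> I" "c \<in> I \<Longrightarrow> d \<notin> I"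
    "d \<in> I \<Longrightarrow> e \<notin> I" "e \<in> I \<Longrightarrow> a \<notin> I" "h \<in> I \<Longrightarrow> a \<notin> I" "h \<in> I \<Longrightarrow> b \<notin> I"
    "h \<in> I \<Longrightarrow> c \<notin> I" "h \<in> I \<Longrightarrow> d \<notin> I" "h \<in> I \<Longrightarrow> e \<notin> I"
    using nb_coloring_edge[OF col] by blast+
  moreover have "a \<in> I \<or> a \<in> F" "b \<in> I \<or> b \<in> F" "c \<in> I \<or> c \<in> F"
    "d \<in> I \<or> d \<in> F" "e \<in> I \<or> e \<in> F" "h \<in> I \<or> h \<in> F"
    using nb_coloring_vertex[OF col] by (simp_all add: verts_def)
  ultimately show False by argo
qed

lemma nb_critical_subgraph_eq:
  "nb_critical H \<Longrightarrow> subgraph S H \<Longrightarrow> \<not> near_bipartite S \<Longrightarrow> S = H"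
  unfolding nb_critical_def by blast

lemma nb_critical_K4:
  assumes crit: "nb_critical H" and dist: "distinct [a, b, c, d]"
    and "adj H a b" "adj H a c" "adj H a d" "adj H b c" "adj H b d" "adj H c d"
  shows "graph_iso H K4"
proof -
  let ?K = "({a, b, c, d}, {{a, b}, {a, c}, {a, d}, {b, c}, {b, d}, {c, d}})"
  have wf: "wf_graph H" using crit by (rule nb_critical_wf_graph)
  have "wf_graph ?K" using dist unfolding wf_graph_def by auto
  moreover have "verts ?K \<subseteq> verts H" using assms adj_wf_graph[OF wf] by auto
  moreover have "edges ?K \<subseteq> edges H" using assms by (auto simp: adj_def)
  ultimately have "subgraph ?K H" by (simp add: subgraph_def)
  then have "?K = H" using nb_critical_subgraph_eq[OF crit] K4_not_near_bipartite[OF dist] by blast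
  then show ?thesis using graph_iso_K4I[OF dist] by simp
qed

lemma nb_critical_W5:
  assumes crit: "nb_critical H" and dist: "distinct [a, b, c, d, e, h]"
    and "adj H a b" "adj H b c" "adj H c d" "adj H d e" "adj H e a"
      "adj H h a" "adj H h b" "adj H h c" "adj H h d" "adj H h e"
  shows "graph_iso H W5"
proof -
  let ?W = "({a, b, c, d, e, h},
    {{a, b}, {b, c}, {c, d}, {d, e}, {e, a}, {h, a}, {h, b}, {h, c}, {h, d}, {h, e}})"
  have wf: "wf_graph H" using crit by (rule nb_critical_wf_graph)
  have "wf_graph ?W" using dist unfolding wf_graph_def by auto
  moreover have "verts ?W \<subseteq> verts H" using assms adj_wf_graph[OF wf] by auto
  moreover have "edges ?W \<subseteq> edges H" using assms by (auto simp: adj_def)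
  ultimately have "subgraph ?W H" by (simp add: subgraph_def)
  then have "?W = H" using nb_critical_subgraph_eq[OF crit] W5_not_near_bipartite[OF dist] by blast
  then show ?thesis using graph_iso_W5I[OF dist] by simp
qed

lemma edges_subset_pair_image:
  assumes wf: "wf_graph G" and pairs: "\<And>s t. adj G s t \<Longrightarrow> (s, t) \<in> P \<or> (t, s) \<in> P"
  shows "edges G \<subseteq> (\<lambda>(x, y). {x, y}) ` P"
proof
  fix e
  assume "e \<in> edges G"
  then obtain s t where e: "e = {s, t}" and st: "adj G s t"
    using wf by (force simp: wf_graph_def adj_def)
  have "e = (\<lambda>(x, y). {x, y}) (s, t)" "e = (\<lambda>(x, y). {x, y}) (t, s)"
    using e by (simp_all add: insert_commute)
  then show "e \<in> (\<lambda>(x, y). {x, y}) ` P" using pairs[OF st] by blast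
qed

(* The listed edges are those of M7 for v1, ..., v5 = u, b, c, w, p and w1 = a, w2 = q. *)
lemma M7_edges:
  assumes wf: "wf_graph H" and V: "verts H = {a, b, c, u, w, p, q}"
    and dist: "distinct [a, b, c, u, w, p, q]"
    and nb: "nbhd H a = {b, c, u}" "nbhd H b = {a, c, u}" "nbhd H c = {a, b, w}"
    and adj: "adj H u p" "adj H u q" "adj H w p" "adj H w q" "adj H p q"
    and nonadj: "\<not> adj H u w"
  shows "edges H = {{u, b}, {b, c}, {c, w}, {w, p}, {p, u},
    {a, u}, {a, b}, {a, c}, {q, u}, {q, w}, {q, p}}"
proof -
  let ?P = "{(u, b), (b, c), (c, w), (w, p), (p, u), (a, u), (a, b), (a, c), (q, u), (q, w), (q, p)}"
  let ?E = "(\<lambda>(x, y). {x, y}) ` ?P"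
  have pair: "(s, t) \<in> ?P \<or> (t, s) \<in> ?P" if st: "adj H s t" for s t
  proof -
    have "s \<in> verts H" "t \<in> verts H" and "s \<noteq> t" using adj_wf_graph[OF wf st] by auto
    then consider "s \<in> {a, b, c}" | "t \<in> {a, b, c}" | "s \<in> {u, w, p, q}" "t \<in> {u, w, p, q}"
      using V by auto
    then show ?thesis
    proof cases
      case 1
      moreover have "t \<in> nbhd H s" using st by (simp add: nbhd_def)
      ultimately show ?thesis by (elim insertE emptyE; simp add: nb; elim disjE; simp)
    next
      case 2
      moreover have "s \<in> nbhd H t" using st by (simp add: nbhd_def adj_sym)
      ultimately show ?thesis by (elim insertE emptyE; simp add: nb; elim disjE; simp)
    next
      case 3
      moreover have "\<not> (s = u \<and> t = w)" "\<not> (s = w \<and> t = u)" using st nonadj by (auto simp: adj_sym)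
      ultimately show ?thesis using \<open>s \<noteq> t\<close> by (elim insertE emptyE) simp_all
    qed
  qed
  then have "edges H \<subseteq> ?E" by (rule edges_subset_pair_image[OF wf])
  moreover have "adj H u b" "adj H b c" "adj H c w" "adj H w p" "adj H p u" "adj H a u"
    "adj H a b" "adj H a c" "adj H q u" "adj H q w" "adj H q p"
    using nb adj by (auto simp: nbhd_def adj_sym[of H _ u] adj_sym[of H q])
  then have "?E \<subseteq> edges H" by (simp add: adj_def)
  ultimately have "edges H = ?E" by (rule subset_antisym)
  also have "\<dots> = {{u, b}, {b, c}, {c, w}, {w, p}, {p, u},
      {a, u}, {a, b}, {a, c}, {q, u}, {q, w}, {q, p}}"
    by simp
  finally show ?thesis .
qed

section \<open>Attachments of a cycle of degree-3 vertices\<close>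

lemma mod_pred_Suc: "(j::nat) < k \<Longrightarrow> ((j + k - 1) mod k + 1) mod k = j"
  by (cases j) (auto simp: mod_Suc)

lemma mod_Suc_pred: "(j::nat) < k \<Longrightarrow> ((j + 1) mod k + k - 1) mod k = j"
  by (auto simp: mod_Suc)

lemma mod_pred_neq_Suc: "3 \<le> (k::nat) \<Longrightarrow> j < k \<Longrightarrow> (j + k - 1) mod k \<noteq> (j + 1) mod k"
  by (cases j) (auto simp: mod_Suc)

definition cycle_attachment :: "'a ugraph \<Rightarrow> 'a list \<Rightarrow> (nat \<Rightarrow> 'a) \<Rightarrow> bool" where
  "cycle_attachment G xs z \<longleftrightarrow> (\<forall>j < length xs.
     nbhd G (xs ! j) = {xs ! ((j + length xs - 1) mod length xs), xs ! ((j + 1) mod length xs), z j} \<and>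
     z j \<notin> set xs)"

lemma cycle_attachment_adj:
  "cycle_attachment G xs z \<Longrightarrow> j < length xs \<Longrightarrow> adj G (xs ! j) (z j)"
  by (auto simp: cycle_attachment_def nbhd_def)

lemma induced_cycle_adj_on_cycle:
  assumes cyc: "induced_cycle G xs" and j: "j < length xs"
    and y: "y \<in> set xs" and adj: "adj G (xs ! j) y"
  shows "y = xs ! ((j + length xs - 1) mod length xs) \<or> y = xs ! ((j + 1) mod length xs)"
proof -
  let ?k = "length xs" and ?next = "\<lambda>i. (i + 1) mod length xs"
  have dist: "distinct xs" using cyc by (simp add: induced_cycle_def is_cycle_def)
  obtain i where i: "i < ?k" "{xs ! j, y} = {xs ! i, xs ! ?next i}"
    using cyc j y adj unfolding induced_cycle_def by (meson nth_mem)
  have "?next i < ?k" using i(1) by (auto intro!: mod_less_divisor)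
  then have "j = i \<and> y = xs ! ?next i \<or> j = ?next i \<and> y = xs ! i"
    using i dist j by (auto simp: nth_eq_iff_index_eq doubleton_eq_iff)
  then show ?thesis using mod_Suc_pred[OF i(1)] by auto
qed

lemma induced_cycle_attachment:
  assumes wf: "wf_graph G" and cyc: "induced_cycle G xs" and deg: "\<forall>x\<in>set xs. degree G x = 3"
  obtains z where "cycle_attachment G xs z"
proof -
  let ?k = "length xs"
  let ?prev = "\<lambda>j. (j + ?k - 1) mod ?k" and ?next = "\<lambda>j. (j + 1) mod ?k"
  have k: "3 \<le> ?k" and dist: "distinct xs"
    and adj: "\<And>i. i < ?k \<Longrightarrow> adj G (xs ! i) (xs ! ?next i)"
    using cyc by (auto simp: induced_cycle_def is_cycle_def)
  have "\<exists>y. nbhd G (xs ! j) = {xs ! ?prev j, xs ! ?next j, y} \<and> y \<notin> set xs" if j: "j < ?k" for j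
  proof -
    have prev: "?prev j < ?k" and succ: "?next j < ?k" using j by (auto intro!: mod_less_divisor)
    have "adj G (xs ! j) (xs ! ?prev j)"
      using adj[OF prev] mod_pred_Suc[OF j] by (simp add: adj_sym)
    moreover have "xs ! ?prev j \<noteq> xs ! ?next j"
      using dist prev succ mod_pred_neq_Suc[OF k j] by (simp add: nth_eq_iff_index_eq)
    moreover have "degree G (xs ! j) = 3" using deg j by simp
    ultimately obtain y where y: "nbhd G (xs ! j) = {xs ! ?prev j, xs ! ?next j, y}"
        and y_new: "y \<notin> {xs ! ?prev j, xs ! ?next j, xs ! j}"
      using degree_3_nbhdE[OF wf _ _ adj[OF j]] by metis
    have "adj G (xs ! j) y" using y unfolding nbhd_def by blast
    then have "y \<notin> set xs" using induced_cycle_adj_on_cycle[OF cyc j] y_new by blast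
    with y show ?thesis by blast
  qed
  then obtain z where "\<forall>j < ?k. nbhd G (xs ! j) = {xs ! ?prev j, xs ! ?next j, z j} \<and> z j \<notin> set xs"
    by metis
  then show thesis by (intro that) (unfold cycle_attachment_def)
qed

lemma cycle_attachment_card:
  assumes wf: "wf_graph G" and cyc: "is_cycle G xs" and att: "cycle_attachment G xs z"
  shows "length xs + 1 \<le> card (verts G)"
proof -
  have "0 < length xs" using cyc by (auto simp: is_cycle_def)
  then have "z 0 \<in> verts G" "z 0 \<notin> set xs"
    using att adj_wf_graph(2)[OF wf cycle_attachment_adj[OF att]] by (auto simp: cycle_attachment_def)
  moreover have "set xs \<subseteq> verts G" "card (set xs) = length xs"
    using cyc by (auto simp: is_cycle_def distinct_card)
  moreover have "finite (verts G)" using wf by (simp add: wf_graph_def)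
  ultimately show ?thesis using card_mono[of "verts G" "insert (z 0) (set xs)"] by simp
qed

lemma cycle_attachment_3:
  "cycle_attachment G [x0, x1, x2] z \<longleftrightarrow>
     nbhd G x0 = {x2, x1, z 0} \<and> nbhd G x1 = {x0, x2, z 1} \<and> nbhd G x2 = {x1, x0, z 2} \<and>
     z 0 \<notin> {x0, x1, x2} \<and> z 1 \<notin> {x0, x1, x2} \<and> z 2 \<notin> {x0, x1, x2}"
  by (simp add: cycle_attachment_def All_less_Suc2 numeral_2_eq_2) blast

section \<open>The family \<open>H\<close>\<prime> and special links\<close>

definition specially_linked :: "nat ugraph \<Rightarrow> nat \<Rightarrow> nat \<Rightarrow> bool" where
  "specially_linked J s t \<longleftrightarrow> (\<exists>H0 v w f. H0 \<in> Hp \<and> {v, w} \<in> edges H0 \<and>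
     embeds_via f (delete_edge H0 {v, w}) J \<and> f v = s \<and> f w = t)"

definition attachments_linked :: "nat ugraph \<Rightarrow> nat list \<Rightarrow> (nat \<Rightarrow> nat) \<Rightarrow> bool" where
  "attachments_linked H xs z \<longleftrightarrow> (\<forall>j < length xs. z j \<noteq> z ((j + 1) mod length xs) \<longrightarrow>
     specially_linked (delete_vertices H (set xs)) (z j) (z ((j + 1) mod length xs)))"

lemma Hp_attachmentE [consumes 1, case_names base step]:
  assumes "H \<in> Hp"
  obtains (base) "base_graph H"
  | (step) xs z where "nb_critical H" "is_cycle H xs" "length xs \<in> {3, 5}"
      "cycle_attachment H xs z" "attachments_linked H xs z"
  using assms
proof cases
  case base
  then show thesis by (intro that(1))
next
  case (step xs)
  let ?k = "length xs"
  have wf: "wf_graph H" using step(1) by (rule nb_critical_wf_graph)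
  obtain z where att: "cycle_attachment H xs z"
    using induced_cycle_attachment[OF wf step(2,4)] by blast
  have "specially_linked (delete_vertices H (set xs)) (z j) (z ((j + 1) mod ?k))"
    if j: "j < ?k" and ne: "z j \<noteq> z ((j + 1) mod ?k)" for j
  proof -
    let ?j' = "(j + 1) mod ?k"
    have "?j' < ?k" using j by (auto intro!: mod_less_divisor)
    then have "nbhd H (xs ! ?j') = {xs ! j, xs ! ((j + 2) mod ?k), z ?j'}"
      using att mod_Suc_pred[OF j] by (simp add: cycle_attachment_def mod_Suc_eq)
    moreover have "nbhd H (xs ! j) = {xs ! ((j + ?k - 1) mod ?k), xs ! ((j + 1) mod ?k), z j}"
      using att j by (simp add: cycle_attachment_def)
    ultimately show ?thesis
      using step(5)[rule_format, OF j, of "z j" "z ?j'"] ne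
      unfolding specially_linked_def Let_def by blast
  qed
  then have "attachments_linked H xs z" by (simp add: attachments_linked_def)
  moreover have "is_cycle H xs" using step(2) by (simp add: induced_cycle_def)
  ultimately show thesis using that(2) step(1,3) att by blast
qed

lemma Hp_wf_graph: "H \<in> Hp \<Longrightarrow> wf_graph H"
  by (erule Hp.cases) (simp_all add: nb_critical_wf_graph)

lemma base_graph_card: "base_graph H \<Longrightarrow> card (verts H) \<in> {4, 6, 7, 12}"
  by (auto simp: base_graph_def card_verts_K4 card_verts_W5 card_verts_J7 card_verts_J12
      dest!: graph_iso_card)

lemma Hp_card_ge_4:
  assumes "H \<in> Hp"
  shows "4 \<le> card (verts H)"
  using assms
proof (cases rule: Hp_attachmentE)
  case base
  then show ?thesis using base_graph_card by fastforce
next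
  case (step xs z)
  then have "wf_graph H" by (simp add: nb_critical_wf_graph)
  then have "length xs + 1 \<le> card (verts H)" using cycle_attachment_card step(2,4) by blast
  then show ?thesis using step(3) by auto
qed

lemma Hp_card_4_K4:
  assumes "H \<in> Hp" and card: "card (verts H) = 4"
  shows "graph_iso H K4"
  using assms(1)
proof (cases rule: Hp_attachmentE)
  case base
  then show ?thesis
    using card by (auto simp: base_graph_def card_verts_W5 card_verts_J7 card_verts_J12
        dest!: graph_iso_card)
next
  case (step xs z)
  have wf: "wf_graph H" using step(1) by (rule nb_critical_wf_graph)
  then have "length xs = 3" using cycle_attachment_card[OF wf step(2,4)] step(3) card by auto
  then obtain x0 x1 x2 where xs: "xs = [x0, x1, x2]" by (auto simp: numeral_eq_Suc length_Suc_conv)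
  have cyc: "distinct [x0, x1, x2]" "{x0, x1, x2} \<subseteq> verts H"
      "adj H x0 x1" "adj H x1 x2" "adj H x2 x0"
    using step(2) by (simp_all add: xs is_cycle_3)
  have att: "nbhd H x0 = {x2, x1, z 0}" "nbhd H x1 = {x0, x2, z 1}" "nbhd H x2 = {x1, x0, z 2}"
      "z 0 \<notin> {x0, x1, x2}" "z 1 \<notin> {x0, x1, x2}" "z 2 \<notin> {x0, x1, x2}"
    using step(4) by (simp_all add: xs cycle_attachment_3)
  then have adj: "adj H x0 (z 0)" "adj H x1 (z 1)" "adj H x2 (z 2)" by (auto simp: nbhd_def)
  then have "{x0, x1, x2, z 0} \<subseteq> verts H" using cyc(2) adj_wf_graph(2)[OF wf] by auto
  moreover have "card {x0, x1, x2, z 0} = 4" using cyc(1) att(4) by simp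
  ultimately have V: "verts H = {x0, x1, x2, z 0}"
    using card wf by (metis card_seteq wf_graph_def order_refl)
  have "z 1 = z 0" "z 2 = z 0" using adj adj_wf_graph(2)[OF wf] att(5,6) unfolding V by auto
  then show ?thesis
    using nb_critical_K4[OF step(1), of x0 x1 x2 "z 0"] cyc adj att(4) by (auto simp: adj_sym)
qed

lemma specially_linked_card:
  assumes wf: "wf_graph H" and C: "C \<subseteq> verts H"
    and link: "specially_linked (delete_vertices H C) s t"
  shows "card C + 4 \<le> card (verts H)"
proof -
  obtain H0 v w f where "H0 \<in> Hp" "embeds_via f (delete_edge H0 {v, w}) (delete_vertices H C)"
    using link unfolding specially_linked_def by blast
  then show ?thesis
    using embeds_via_card[OF wf C] Hp_card_ge_4 by (fastforce simp: delete_edge_def)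
qed

lemma specially_linked_K4_minus_edge:
  assumes wf: "wf_graph H" and C: "C \<subseteq> verts H" and small: "card (verts H) \<le> card C + 4"
    and link: "specially_linked (delete_vertices H C) s t"
  obtains p q where "verts H - C = {s, t, p, q}" "distinct [s, t, p, q]"
    "adj H s p" "adj H s q" "adj H t p" "adj H t q" "adj H p q"
proof -
  obtain H0 v w f where H0: "H0 \<in> Hp" and vw: "{v, w} \<in> edges H0"
    and emb: "embeds_via f (delete_edge H0 {v, w}) (delete_vertices H C)"
    and s: "f v = s" and t: "f w = t"
    using link unfolding specially_linked_def by blast
  have fin: "finite (verts H)" using wf by (simp add: wf_graph_def)
  have card0: "card (verts H0) = 4"
    using embeds_via_card[OF wf C emb] Hp_card_ge_4[OF H0] small by (simp add: delete_edge_def)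
  have vw0: "v \<in> verts H0" "w \<in> verts H0" "v \<noteq> w"
    using adj_wf_graph[OF Hp_wf_graph[OF H0], of v w] vw by (simp_all add: adj_def)
  then have "card (verts H0 - {v, w}) = 2" using card0 by (simp add: card_Diff_subset)
  then obtain p0 q0 where pq0: "verts H0 - {v, w} = {p0, q0}" "p0 \<noteq> q0"
    by (auto simp: card_2_iff)
  then have V0: "verts H0 = {v, w, p0, q0}" and dist0: "distinct [v, w, p0, q0]"
    using vw0 by auto
  have inj: "inj_on f (verts H0)" and img: "f ` verts H0 \<subseteq> verts H - C"
    and kept: "\<And>a b. {a, b} \<in> edges H0 \<Longrightarrow> {a, b} \<noteq> {v, w} \<Longrightarrow> adj H (f a) (f b)"
    using emb by (auto simp: embeds_via_def delete_edge_def delete_vertices_def adj_def)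
  have adj: "adj H (f a) (f b)"
    if "a \<in> verts H0" "b \<in> verts H0" "a \<noteq> b" "{a, b} \<noteq> {v, w}" for a b
    using kept graph_iso_K4_adj[OF Hp_card_4_K4[OF H0 card0]] that by (simp add: adj_def)
  have "card (verts H - C) \<le> card (f ` verts H0)"
    using small C fin card0 card_image[OF inj] by (simp add: card_Diff_subset finite_subset)
  then have "f ` verts H0 = verts H - C" using img fin by (simp add: card_seteq)
  moreover have "distinct [f v, f w, f p0, f q0]" using inj dist0 V0 by (auto simp: inj_on_def)
  moreover have "adj H (f v) (f p0)" "adj H (f v) (f q0)" "adj H (f w) (f p0)"
    "adj H (f w) (f q0)" "adj H (f p0) (f q0)"
    using adj V0 dist0 by (auto simp: doubleton_eq_iff)
  ultimately show thesis using that[of "f p0" "f q0"] V0 s t by simp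
qed

lemma specially_linked_nonadjacent:
  assumes crit: "nb_critical H" and C: "C \<subseteq> verts H" "C \<noteq> {}"
    and small: "card (verts H) \<le> card C + 4"
    and link: "specially_linked (delete_vertices H C) s t"
  shows "\<not> adj H s t"
proof
  assume st: "adj H s t"
  have wf: "wf_graph H" using crit by (rule nb_critical_wf_graph)
  obtain p q where "distinct [s, t, p, q]"
    "adj H s p" "adj H s q" "adj H t p" "adj H t q" "adj H p q"
    using specially_linked_K4_minus_edge[OF wf C(1) small link] by blast
  then have "graph_iso H K4" using nb_critical_K4[OF crit] st by (simp add: adj_sym)
  then have "card (verts H) = 4" by (simp add: graph_iso_card card_verts_K4)
  moreover have "card C + 4 \<le> card (verts H)" by (rule specially_linked_card[OF wf C(1) link])
  moreover have "card C \<noteq> 0" using C wf by (metis card_0_eq finite_subset wf_graph_def)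
  ultimately show False by linarith
qed

lemma specially_linked_adj_outside:
  assumes wf: "wf_graph H" and C: "C \<subseteq> verts H" and small: "card (verts H) \<le> card C + 4"
    and link: "specially_linked (delete_vertices H C) s t"
    and x: "x \<in> verts H - C" "x \<noteq> s" "x \<noteq> t"
  shows "adj H s x"
proof -
  obtain p q where "verts H - C = {s, t, p, q}" "adj H s p" "adj H s q"
    using specially_linked_K4_minus_edge[OF wf C small link] by blast
  then show ?thesis using x by auto
qed

lemma attachments_linked_3:
  "attachments_linked H [x0, x1, x2] z \<longleftrightarrow>
     (z 0 \<noteq> z 1 \<longrightarrow> specially_linked (delete_vertices H {x0, x1, x2}) (z 0) (z 1)) \<and>
     (z 1 \<noteq> z 2 \<longrightarrow> specially_linked (delete_vertices H {x0, x1, x2}) (z 1) (z 2)) \<and>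
     (z 2 \<noteq> z 0 \<longrightarrow> specially_linked (delete_vertices H {x0, x1, x2}) (z 2) (z 0))"
  by (simp add: attachments_linked_def All_less_Suc2 numeral_2_eq_2)

section \<open>Graphs of the family with at most seven vertices\<close>

lemma triangle_attachments_M7:
  assumes crit: "nb_critical H" and small: "card (verts H) \<le> 7"
    and C: "{a, b, c} \<subseteq> verts H" "distinct [a, b, c]"
    and nb: "nbhd H a = {b, c, u}" "nbhd H b = {a, c, u}" "nbhd H c = {a, b, w}"
    and link: "specially_linked (delete_vertices H {a, b, c}) u w"
  shows "graph_iso H M7"
proof -
  have wf: "wf_graph H" using crit by (rule nb_critical_wf_graph)
  have small': "card (verts H) \<le> card {a, b, c} + 4" using C(2) small by simp
  obtain p q where pq: "verts H - {a, b, c} = {u, w, p, q}" "distinct [u, w, p, q]"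
    "adj H u p" "adj H u q" "adj H w p" "adj H w q" "adj H p q"
    using specially_linked_K4_minus_edge[OF wf C(1) small' link] by blast
  have "\<not> adj H u w" using specially_linked_nonadjacent[OF crit C(1) _ small' link] by simp
  have "verts H = {a, b, c} \<union> (verts H - {a, b, c})" using C(1) by blast
  also have "\<dots> = {a, b, c, u, w, p, q}" unfolding pq(1) by (simp only: Un_insert_left Un_empty_left)
  finally have V: "verts H = {a, b, c, u, w, p, q}" .
  have "{u, w, p, q} \<inter> {a, b, c} = {}" using pq(1) by blast
  then have dist: "distinct [a, b, c, u, w, p, q]" using pq(2) C(2) by simp
  have "H = (verts H, edges H)" by (simp add: verts_def edges_def)
  also have "\<dots> = ({u, b, c, w, p, a, q}, {{u, b}, {b, c}, {c, w}, {w, p}, {p, u},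
      {a, u}, {a, b}, {a, c}, {q, u}, {q, w}, {q, p}})"
    unfolding M7_edges[OF wf V dist nb pq(3-7) \<open>\<not> adj H u w\<close>] V by auto
  finally have H: "H = \<dots>" .
  have "distinct [u, b, c, w, p, a, q]" using dist by auto
  from graph_iso_M7I[OF this] show ?thesis unfolding H .
qed

lemma triangle_attachments_K4_or_M7:
  assumes crit: "nb_critical H" and small: "card (verts H) \<le> 7"
    and cyc: "is_cycle H xs" and len: "length xs = 3"
    and att: "cycle_attachment H xs z" and linked: "attachments_linked H xs z"
  shows "graph_iso H K4 \<or> graph_iso H M7"
proof -
  obtain x0 x1 x2 where xs: "xs = [x0, x1, x2]"
    using len by (auto simp: numeral_eq_Suc length_Suc_conv)
  let ?C = "{x0, x1, x2}"
  have wf: "wf_graph H" using crit by (rule nb_critical_wf_graph)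
  have tri: "distinct [x0, x1, x2]" "?C \<subseteq> verts H" "adj H x0 x1" "adj H x1 x2" "adj H x2 x0"
    using cyc by (simp_all add: xs is_cycle_3)
  have nb: "nbhd H x0 = {x2, x1, z 0}" "nbhd H x1 = {x0, x2, z 1}" "nbhd H x2 = {x1, x0, z 2}"
    and out: "z 0 \<notin> ?C" "z 1 \<notin> ?C" "z 2 \<notin> ?C"
    using att by (simp_all add: xs cycle_attachment_3)
  have link: "z 0 \<noteq> z 1 \<Longrightarrow> specially_linked (delete_vertices H ?C) (z 0) (z 1)"
    "z 1 \<noteq> z 2 \<Longrightarrow> specially_linked (delete_vertices H ?C) (z 1) (z 2)"
    "z 2 \<noteq> z 0 \<Longrightarrow> specially_linked (delete_vertices H ?C) (z 2) (z 0)"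
    using linked by (simp_all add: xs attachments_linked_3)
  have rotate: "{x1, x2, x0} = ?C" "{x2, x0, x1} = ?C" by auto
  consider "z 0 = z 1" "z 1 = z 2" | "z 0 = z 1" "z 1 \<noteq> z 2" | "z 1 = z 2" "z 2 \<noteq> z 0"
    | "z 2 = z 0" "z 0 \<noteq> z 1" | "z 0 \<noteq> z 1" "z 1 \<noteq> z 2" "z 2 \<noteq> z 0"
    by blast
  then show ?thesis
  proof cases
    case 1
    then have "adj H x0 (z 0)" "adj H x1 (z 0)" "adj H x2 (z 0)"
      using nb by (simp_all add: nbhd_def set_eq_iff)
    moreover have "distinct [x0, x1, x2, z 0]" using tri(1) out(1) by auto
    ultimately show ?thesis using nb_critical_K4[OF crit] tri(3-5) by (simp add: adj_sym)
  next
    case 2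
    then show ?thesis using triangle_attachments_M7[OF crit small tri(2,1), of "z 0" "z 2"] nb link(2)
      by (simp add: insert_commute)
  next
    case 3
    then show ?thesis using triangle_attachments_M7[OF crit small, of x1 x2 x0 "z 1" "z 0"]
        tri(1,2) nb link(3) unfolding rotate by (simp add: insert_commute)
  next
    case 4
    then show ?thesis using triangle_attachments_M7[OF crit small, of x2 x0 x1 "z 0" "z 1"]
        tri(1,2) nb link(1) unfolding rotate by (simp add: insert_commute)
  next
    case 5
    have small': "card (verts H) \<le> card ?C + 4" using tri(1) small by simp
    have "z 2 \<in> verts H - ?C"
      using out(3) adj_wf_graph(2)[OF wf, of x2] nb(3) by (auto simp: nbhd_def set_eq_iff)
    then have "adj H (z 0) (z 2)"
      using specially_linked_adj_outside[OF wf tri(2) small' link(1)[OF 5(1)]] 5 by simp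
    moreover have "\<not> adj H (z 2) (z 0)"
      using specially_linked_nonadjacent[OF crit tri(2) _ small' link(3)[OF 5(3)]] by simp
    ultimately show ?thesis by (simp add: adj_sym)
  qed
qed

lemma pentagon_attachments_W5:
  assumes crit: "nb_critical H" and small: "card (verts H) \<le> 7"
    and cyc: "is_cycle H xs" and len: "length xs = 5"
    and att: "cycle_attachment H xs z" and linked: "attachments_linked H xs z"
  shows "graph_iso H W5"
proof -
  have wf: "wf_graph H" using crit by (rule nb_critical_wf_graph)
  have C: "set xs \<subseteq> verts H" "card (set xs) = 5"
    using cyc len by (auto simp: is_cycle_def distinct_card)
  have z_Suc: "z (Suc j) = z j" if "Suc j < 5" for j
  proof (rule ccontr)
    assume ne: "z (Suc j) \<noteq> z j"
    have "j < length xs" "(j + 1) mod length xs = Suc j" using that len by simp_all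
    then have "specially_linked (delete_vertices H (set xs)) (z j) (z (Suc j))"
      using linked ne unfolding attachments_linked_def by metis
    then show False using specially_linked_card[OF wf C(1)] C(2) small by fastforce
  qed
  have hub_eq: "z j = z 0" if "j < 5" for j
    using that by (induction j) (simp_all add: z_Suc)
  have hub: "adj H (z 0) x" if x: "x \<in> set xs" for x
  proof -
    obtain j where j: "j < 5" "x = xs ! j" using x len by (auto simp: in_set_conv_nth)
    then have "adj H x (z j)" using cycle_attachment_adj[OF att] len by simp
    then show ?thesis using hub_eq[OF j(1)] by (simp add: adj_sym)
  qed
  obtain x0 x1 x2 x3 x4 where xs: "xs = [x0, x1, x2, x3, x4]"
    using len by (auto simp: numeral_eq_Suc length_Suc_conv)
  have "z 0 \<notin> set xs" using att len by (simp add: cycle_attachment_def)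
  then have "distinct [x0, x1, x2, x3, x4, z 0]" using cyc by (auto simp: xs is_cycle_5)
  then show ?thesis
    using nb_critical_W5[OF crit] cyc hub by (simp add: xs is_cycle_5)
qed

theorem lemma3p7:
  fixes H :: "nat ugraph"
  assumes "H \<in> Hp"
    and "\<not> graph_iso H K4" and "\<not> graph_iso H W5"
    and "\<not> graph_iso H M7" and "\<not> graph_iso H J7"
  shows "card (verts H) \<ge> 8"
proof (rule ccontr)
  assume "\<not> card (verts H) \<ge> 8"
  then have small: "card (verts H) \<le> 7" by simp
  from assms(1) show False
  proof (cases rule: Hp_attachmentE)
    case base
    then have "graph_iso H J12" using assms(2-5) by (auto simp: base_graph_def)
    then show False using small graph_iso_card card_verts_J12 by fastforce
  next
    case (step xs z)
    then consider "length xs = 3" | "length xs = 5" by auto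
    then show False
    proof cases
      case 1
      then show False
        using triangle_attachments_K4_or_M7[OF step(1) small step(2) _ step(4,5)] assms(2,4) by blast
    next
      case 2
      then show False
        using pentagon_attachments_W5[OF step(1) small step(2) _ step(4,5)] assms(3) by blast
    qed
  qed
qed

end
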